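(* Let $G$ be a semi-simple group (i.e. $G$ has no nontrivial normal abelian subgroup) with $|\mathcal{C}(G)|=n$ for some positive integer $n$. Then $G$ is finite and $|G|\le (n-1)!$.
   Context: For a group $G$, $\mathcal{C}(G)=\{C_G(x) : x\in G\}$ denotes the set of centralizers of elements of $G$, where $C_G(x)=\{g\in G: gx=xg\}$. The group $G$ is not assumed finite a priori. *)

theory Defs
  imports "HOL-Algebra.Algebra"
begin

definition centralizer :: "('a, 'b) monoid_scheme \<Rightarrow> 'a \<Rightarrow> 'a set" where
  "centralizer G x = {g \<in> carrier G. g \<otimes>\<^bsub>G\<^esub> x = x \<otimes>\<^bsub>G\<^esub> g}"

definition centralizers :: "('a, 'b) monoid_scheme \<Rightarrow> 'a set set" where
  "centralizers G = centralizer G ` carrier G"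

definition semisimple_group :: "('a, 'b) monoid_scheme \<Rightarrow> bool" where
  "semisimple_group G \<longleftrightarrow>
     (\<forall>N. N \<lhd> G \<and> (\<forall>x\<in>N. \<forall>y\<in>N. x \<otimes>\<^bsub>G\<^esub> y = y \<otimes>\<^bsub>G\<^esub> x) \<longrightarrow> N = {\<one>\<^bsub>G\<^esub>})"

end

theory Submission
  imports Defs "HOL-Combinatorics.Permutations"
begin

(* The group G acts by conjugation on the set of its centralizers,
   since g C(x) g^-1 = C(g x g^-1), and this action fixes C(1) = G.  So every g induces
   a permutation of the n - 1 proper centralizers, giving a map G -> Sym(n - 1).
   This map is injective when G is semi-simple: if conjugation by a fixes every
   centralizer, then every x commutes with a x a^-1 (as a x a^-1 lies in its own
   centralizer, which is C(x)); a short commutator computation then shows that a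
   commutes with all of its conjugates.  Hence a lies in the centre of the normal
   subgroup N of elements commuting with all conjugates of a, and the centre of a
   normal subgroup is a normal abelian subgroup, which is trivial by semi-simplicity.
   Therefore G embeds into Sym(n - 1), so G is finite of order at most (n - 1)!. *)

definition commutant :: "('a, 'b) monoid_scheme \<Rightarrow> 'a set \<Rightarrow> 'a set" where
  "commutant G A = {g \<in> carrier G. \<forall>x\<in>A. g \<otimes>\<^bsub>G\<^esub> x = x \<otimes>\<^bsub>G\<^esub> g}"

definition conj_class :: "('a, 'b) monoid_scheme \<Rightarrow> 'a \<Rightarrow> 'a set" where
  "conj_class G a = {g \<otimes>\<^bsub>G\<^esub> a \<otimes>\<^bsub>G\<^esub> inv\<^bsub>G\<^esub> g | g. g \<in> carrier G}"

definition conj_image :: "('a, 'b) monoid_scheme \<Rightarrow> 'a \<Rightarrow> 'a set \<Rightarrow> 'a set" where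
  "conj_image G g C = (\<lambda>y. g \<otimes>\<^bsub>G\<^esub> y \<otimes>\<^bsub>G\<^esub> inv\<^bsub>G\<^esub> g) ` C"

context group
begin

lemma inv_mult_cancel_left [simp]:
  "g \<in> carrier G \<Longrightarrow> w \<in> carrier G \<Longrightarrow> inv g \<otimes> (g \<otimes> w) = w"
  by (simp flip: m_assoc)

lemma mult_inv_cancel_left [simp]:
  "g \<in> carrier G \<Longrightarrow> w \<in> carrier G \<Longrightarrow> g \<otimes> (inv g \<otimes> w) = w"
  by (simp flip: m_assoc)

lemma commute_inv:
  assumes x: "x \<in> carrier G" and y: "y \<in> carrier G" and xy: "x \<otimes> y = y \<otimes> x"
  shows "x \<otimes> inv y = inv y \<otimes> x"
proof -
  have "x \<otimes> inv y = inv y \<otimes> ((y \<otimes> x) \<otimes> inv y)" using x y by (simp add: m_assoc)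
  also have "\<dots> = inv y \<otimes> ((x \<otimes> y) \<otimes> inv y)" by (simp only: xy)
  also have "\<dots> = inv y \<otimes> x" using x y by (simp add: m_assoc)
  finally show ?thesis .
qed

lemma commute_mult:
  assumes x: "x \<in> carrier G" and y: "y \<in> carrier G" and z: "z \<in> carrier G"
    and xy: "x \<otimes> y = y \<otimes> x" and xz: "x \<otimes> z = z \<otimes> x"
  shows "x \<otimes> (y \<otimes> z) = (y \<otimes> z) \<otimes> x"
proof -
  have "x \<otimes> (y \<otimes> z) = (x \<otimes> y) \<otimes> z" using x y z by (simp add: m_assoc)
  also have "\<dots> = y \<otimes> (x \<otimes> z)" using x y z by (simp only: xy m_assoc)
  also have "\<dots> = y \<otimes> (z \<otimes> x)" by (simp only: xz)
  also have "\<dots> = (y \<otimes> z) \<otimes> x" using x y z by (simp add: m_assoc)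
  finally show ?thesis .
qed

lemma commute_conj:
  assumes x: "x \<in> carrier G" and y: "y \<in> carrier G" and g: "g \<in> carrier G"
    and xy: "x \<otimes> y = y \<otimes> x"
  shows "(g \<otimes> x \<otimes> inv g) \<otimes> (g \<otimes> y \<otimes> inv g) = (g \<otimes> y \<otimes> inv g) \<otimes> (g \<otimes> x \<otimes> inv g)"
proof -
  have "(g \<otimes> x \<otimes> inv g) \<otimes> (g \<otimes> y \<otimes> inv g) = g \<otimes> (x \<otimes> y) \<otimes> inv g"
    using x y g by (simp add: m_assoc)
  also have "\<dots> = g \<otimes> (y \<otimes> x) \<otimes> inv g" by (simp only: xy)
  also have "\<dots> = (g \<otimes> y \<otimes> inv g) \<otimes> (g \<otimes> x \<otimes> inv g)" using x y g by (simp add: m_assoc)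
  finally show ?thesis .
qed

lemma commutant_subgroup:
  assumes A: "A \<subseteq> carrier G"
  shows "subgroup (commutant G A) G"
proof (rule subgroupI)
  show "commutant G A \<subseteq> carrier G" by (auto simp: commutant_def)
  have "\<one> \<in> commutant G A" using A by (auto simp: commutant_def subsetD)
  then show "commutant G A \<noteq> {}" by blast
next
  fix g assume g: "g \<in> commutant G A"
  then have gc: "g \<in> carrier G" and gx: "\<And>x. x \<in> A \<Longrightarrow> g \<otimes> x = x \<otimes> g"
    by (simp_all add: commutant_def)
  have "inv g \<otimes> x = x \<otimes> inv g" if x: "x \<in> A" for x
    using commute_inv[OF subsetD[OF A x] gc gx[OF x, symmetric], symmetric] .
  then show "inv g \<in> commutant G A" using gc by (simp add: commutant_def)
next
  fix g h assume "g \<in> commutant G A" "h \<in> commutant G A"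
  then have gc: "g \<in> carrier G" "h \<in> carrier G"
    and gx: "\<And>x. x \<in> A \<Longrightarrow> g \<otimes> x = x \<otimes> g" "\<And>x. x \<in> A \<Longrightarrow> h \<otimes> x = x \<otimes> h"
    by (simp_all add: commutant_def)
  have "(g \<otimes> h) \<otimes> x = x \<otimes> (g \<otimes> h)" if x: "x \<in> A" for x
    using commute_mult[OF subsetD[OF A x] gc gx(1)[OF x, symmetric] gx(2)[OF x, symmetric],
        symmetric] .
  then show "g \<otimes> h \<in> commutant G A" using gc by (simp add: commutant_def)
qed

lemma commutant_normal:
  assumes A: "A \<subseteq> carrier G"
    and closed: "\<And>g x. g \<in> carrier G \<Longrightarrow> x \<in> A \<Longrightarrow> g \<otimes> x \<otimes> inv g \<in> A"
  shows "commutant G A \<lhd> G"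
proof (rule normal_invI[OF commutant_subgroup[OF A]])
  fix g z assume g: "g \<in> carrier G" and z: "z \<in> commutant G A"
  have zc: "z \<in> carrier G" using z by (simp add: commutant_def)
  have "(g \<otimes> z \<otimes> inv g) \<otimes> x = x \<otimes> (g \<otimes> z \<otimes> inv g)" if x: "x \<in> A" for x
  proof -
    have x': "inv g \<otimes> x \<otimes> g \<in> A" using closed[of "inv g" x] g x by simp
    then have "z \<otimes> (inv g \<otimes> x \<otimes> g) = (inv g \<otimes> x \<otimes> g) \<otimes> z"
      using z by (simp add: commutant_def)
    from commute_conj[OF zc subsetD[OF A x'] g this]
    have "(g \<otimes> z \<otimes> inv g) \<otimes> (g \<otimes> (inv g \<otimes> x \<otimes> g) \<otimes> inv g)
        = (g \<otimes> (inv g \<otimes> x \<otimes> g) \<otimes> inv g) \<otimes> (g \<otimes> z \<otimes> inv g)" .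
    moreover have "g \<otimes> (inv g \<otimes> x \<otimes> g) \<otimes> inv g = x"
      using g subsetD[OF A x] by (simp add: m_assoc)
    ultimately show ?thesis by simp
  qed
  then show "g \<otimes> z \<otimes> inv g \<in> commutant G A"
    using g zc by (simp add: commutant_def)
qed

text \<open>In a semi-simple group the centre \<open>N \<inter> commutant G N\<close> of a normal subgroup \<open>N\<close>
  is trivial: it is itself a normal abelian subgroup.\<close>

lemma semisimple_normal_centre_trivial:
  assumes ss: "semisimple_group G" and N: "N \<lhd> G"
  shows "N \<inter> commutant G N = {\<one>}"
proof -
  have NG: "N \<subseteq> carrier G" using normal_imp_subgroup[OF N] by (rule subgroup.subset)
  have "commutant G N \<lhd> G"
    using NG normal_invE(2)[OF N] by (rule commutant_normal)
  then have "N \<inter> commutant G N \<lhd> G" using N by (intro normal_subgroup_intersect)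
  moreover have "\<forall>x\<in>N \<inter> commutant G N. \<forall>y\<in>N \<inter> commutant G N. x \<otimes> y = y \<otimes> x"
    unfolding commutant_def by blast
  ultimately show ?thesis using ss unfolding semisimple_group_def by blast
qed

text \<open>With
  \<open>c = g\<^sup>-\<^sup>1 a\<^sup>-\<^sup>1 g a\<close>, applying the hypothesis to \<open>g\<close> and to \<open>g a\<close> shows that \<open>c\<close>
  commutes with \<open>a\<close>, and \<open>c a\<^sup>-\<^sup>1 = g\<^sup>-\<^sup>1 a\<^sup>-\<^sup>1 g\<close>.\<close>

lemma commute_conjugates:
  assumes a: "a \<in> carrier G"
    and hyp: "\<And>y. y \<in> carrier G \<Longrightarrow> y \<otimes> (inv a \<otimes> y \<otimes> a) = (inv a \<otimes> y \<otimes> a) \<otimes> y"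
    and g: "g \<in> carrier G"
  shows "a \<otimes> (inv g \<otimes> a \<otimes> g) = (inv g \<otimes> a \<otimes> g) \<otimes> a"
proof -
  have commutator: "y \<otimes> (inv y \<otimes> (inv a \<otimes> y \<otimes> a)) = (inv y \<otimes> (inv a \<otimes> y \<otimes> a)) \<otimes> y"
    if y: "y \<in> carrier G" for y
    by (rule commute_mult) (use y a hyp[OF y] in auto)
  define c where "c = inv g \<otimes> (inv a \<otimes> g \<otimes> a)"
  have c: "c \<in> carrier G" using a g by (simp add: c_def)
  have gc: "g \<otimes> c = c \<otimes> g" using commutator[OF g] by (simp add: c_def)
  have "inv (g \<otimes> a) \<otimes> (inv a \<otimes> (g \<otimes> a) \<otimes> a) = inv a \<otimes> c \<otimes> a"
    using a g by (simp add: c_def m_assoc inv_mult_group)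
  then have "(inv a \<otimes> c \<otimes> a) \<otimes> (g \<otimes> a) = (g \<otimes> a) \<otimes> (inv a \<otimes> c \<otimes> a)"
    using commutator[of "g \<otimes> a"] a g by simp
  also have "\<dots> = (g \<otimes> c) \<otimes> a" using a g c by (simp add: m_assoc)
  also have "\<dots> = c \<otimes> (g \<otimes> a)" using a g c gc by (metis m_assoc)
  finally have "c = inv a \<otimes> c \<otimes> a" using a g c by simp
  then have "a \<otimes> c = a \<otimes> (inv a \<otimes> c \<otimes> a)" by simp
  then have ac: "a \<otimes> c = c \<otimes> a" using a c by (simp add: m_assoc)
  have "a \<otimes> (c \<otimes> inv a) = (c \<otimes> inv a) \<otimes> a"
    by (rule commute_mult) (use a c ac in auto)
  moreover have "c \<otimes> inv a = inv g \<otimes> inv a \<otimes> g" using a g by (simp add: c_def m_assoc)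
  ultimately have "a \<otimes> inv (inv g \<otimes> inv a \<otimes> g) = inv (inv g \<otimes> inv a \<otimes> g) \<otimes> a"
    using a g by (intro commute_inv) auto
  then show ?thesis using a g by (simp add: inv_mult_group m_assoc)
qed

lemma conj_classI: "g \<in> carrier G \<Longrightarrow> g \<otimes> a \<otimes> inv g \<in> conj_class G a"
  unfolding conj_class_def by blast

lemma conj_class_self: "a \<in> carrier G \<Longrightarrow> a \<in> conj_class G a"
  using conj_classI[OF one_closed, of a] by simp

lemma conj_class_conj_closed:
  assumes a: "a \<in> carrier G" and g: "g \<in> carrier G" and x: "x \<in> conj_class G a"
  shows "g \<otimes> x \<otimes> inv g \<in> conj_class G a"
proof -
  obtain h where h: "h \<in> carrier G" and xh: "x = h \<otimes> a \<otimes> inv h"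
    using x unfolding conj_class_def by blast
  have "g \<otimes> x \<otimes> inv g = (g \<otimes> h) \<otimes> a \<otimes> inv (g \<otimes> h)"
    using g h a by (simp add: xh m_assoc inv_mult_group)
  then show ?thesis using conj_classI[of "g \<otimes> h" a] g h by simp
qed

lemma commutant_conj_class_normal:
  assumes a: "a \<in> carrier G"
  shows "commutant G (conj_class G a) \<lhd> G"
proof (rule commutant_normal)
  show "conj_class G a \<subseteq> carrier G" using a by (auto simp: conj_class_def)
qed (rule conj_class_conj_closed[OF a])

text \<open>In a semi-simple group, an element \<open>a\<close> such that every \<open>x\<close> commutes with \<open>a x a\<^sup>-\<^sup>1\<close>
  is trivial: \<open>a\<close> lies in the centre of the normal subgroup of elements commuting with
  all conjugates of \<open>a\<close>.\<close>

lemma semisimple_commuting_conjugation_trivial: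
  assumes ss: "semisimple_group G" and a: "a \<in> carrier G"
    and hyp: "\<And>x. x \<in> carrier G \<Longrightarrow> x \<otimes> (a \<otimes> x \<otimes> inv a) = (a \<otimes> x \<otimes> inv a) \<otimes> x"
  shows "a = \<one>"
proof -
  define N where "N = commutant G (conj_class G a)"
  have N: "N \<lhd> G" unfolding N_def using a by (rule commutant_conj_class_normal)
  have commute_inv_conj: "y \<otimes> (inv a \<otimes> y \<otimes> a) = (inv a \<otimes> y \<otimes> a) \<otimes> y"
    if y: "y \<in> carrier G" for y
  proof -
    have undo_conj: "a \<otimes> (inv a \<otimes> y \<otimes> a) \<otimes> inv a = y" using a y by (simp add: m_assoc)
    have "inv a \<otimes> y \<otimes> a \<in> carrier G" using a y by simp
    from hyp[OF this] show ?thesis unfolding undo_conj by (rule sym)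
  qed
  have conj_commute: "a \<otimes> x = x \<otimes> a" if x: "x \<in> conj_class G a" for x
  proof -
    obtain g where g: "g \<in> carrier G" and xg: "x = g \<otimes> a \<otimes> inv g"
      using x unfolding conj_class_def by blast
    have g': "inv g \<in> carrier G" using g by simp
    show ?thesis
      using commute_conjugates[OF a commute_inv_conj g'] unfolding xg inv_inv[OF g] .
  qed
  then have aN: "a \<in> N" using a unfolding N_def commutant_def by blast
  have "z \<otimes> a = a \<otimes> z" if "z \<in> N" for z
    using that conj_class_self[OF a] unfolding N_def commutant_def by blast
  then have "a \<in> commutant G N" using a unfolding commutant_def by simp
  with aN show ?thesis using semisimple_normal_centre_trivial[OF ss N] by blast
qed

lemma conj_image_centralizer:
  assumes g: "g \<in> carrier G" and x: "x \<in> carrier G"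
  shows "conj_image G g (centralizer G x) = centralizer G (g \<otimes> x \<otimes> inv g)"
proof
  show "conj_image G g (centralizer G x) \<subseteq> centralizer G (g \<otimes> x \<otimes> inv g)"
    using commute_conj[OF _ x g] g x unfolding conj_image_def centralizer_def by auto
next
  show "centralizer G (g \<otimes> x \<otimes> inv g) \<subseteq> conj_image G g (centralizer G x)"
  proof
    fix z assume "z \<in> centralizer G (g \<otimes> x \<otimes> inv g)"
    then have zc: "z \<in> carrier G" and zx: "z \<otimes> (g \<otimes> x \<otimes> inv g) = (g \<otimes> x \<otimes> inv g) \<otimes> z"
      unfolding centralizer_def by auto
    have "(inv g \<otimes> z \<otimes> g) \<otimes> x = x \<otimes> (inv g \<otimes> z \<otimes> g)"
      using commute_conj[OF zc _ inv_closed[OF g] zx] g x zc by (simp add: m_assoc)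
    then have "inv g \<otimes> z \<otimes> g \<in> centralizer G x"
      using g zc unfolding centralizer_def by simp
    moreover have "z = g \<otimes> (inv g \<otimes> z \<otimes> g) \<otimes> inv g" using g zc by (simp add: m_assoc)
    ultimately show "z \<in> conj_image G g (centralizer G x)" unfolding conj_image_def by blast
  qed
qed

lemma conj_image_mult:
  assumes "C \<subseteq> carrier G" "g \<in> carrier G" "h \<in> carrier G"
  shows "conj_image G h (conj_image G g C) = conj_image G (h \<otimes> g) C"
  unfolding conj_image_def image_image
  by (rule image_cong) (use assms in \<open>auto simp: m_assoc inv_mult_group\<close>)

lemma conj_image_inv:
  assumes C: "C \<subseteq> carrier G" and g: "g \<in> carrier G"
  shows "conj_image G (inv g) (conj_image G g C) = C"
proof -
  have "conj_image G \<one> C = C"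
    using C unfolding conj_image_def by (auto simp: image_iff) (metis in_mono l_one r_one)
  then show ?thesis using conj_image_mult[OF C g inv_closed[OF g]] g by simp
qed

lemma centralizer_subset: "centralizer G x \<subseteq> carrier G"
  unfolding centralizer_def by auto

lemma centralizers_subset: "C \<in> centralizers G \<Longrightarrow> C \<subseteq> carrier G"
  using centralizer_subset unfolding centralizers_def by blast

lemma centralizer_one: "centralizer G \<one> = carrier G"
  unfolding centralizer_def by auto

lemma carrier_in_centralizers: "carrier G \<in> centralizers G"
  unfolding centralizers_def by (metis centralizer_one image_eqI one_closed)

lemma conj_image_carrier: "g \<in> carrier G \<Longrightarrow> conj_image G g (carrier G) = carrier G"
  using conj_image_centralizer[of g \<one>] by (simp add: centralizer_one)

lemma conj_image_bij:
  assumes g: "g \<in> carrier G"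
  shows "bij_betw (conj_image G g) (centralizers G) (centralizers G)"
proof -
  have maps: "conj_image G h C \<in> centralizers G" if h: "h \<in> carrier G" and "C \<in> centralizers G" for h C
    using that conj_image_centralizer[OF h] unfolding centralizers_def by auto
  show ?thesis
  proof (rule bij_betw_byWitness[where f' = "conj_image G (inv g)"])
    show "\<forall>C\<in>centralizers G. conj_image G (inv g) (conj_image G g C) = C"
      using conj_image_inv centralizers_subset g by blast
    show "\<forall>C\<in>centralizers G. conj_image G g (conj_image G (inv g) C) = C"
      using conj_image_inv[OF _ inv_closed[OF g]] centralizers_subset g by simp
  qed (use maps g in auto)
qed

definition conj_perm :: "'a \<Rightarrow> 'a set \<Rightarrow> 'a set" where
  "conj_perm g C = (if C \<in> centralizers G - {carrier G} then conj_image G g C else C)"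

lemma conj_perm_permutes:
  assumes g: "g \<in> carrier G"
  shows "conj_perm g permutes (centralizers G - {carrier G})"
proof (rule bij_imp_permutes)
  have "bij_betw (conj_image G g) (centralizers G - {carrier G}) (centralizers G - {carrier G})"
    using conj_image_bij[OF g] conj_image_carrier[OF g] carrier_in_centralizers
    by (intro bij_betw_DiffI) auto
  then show "bij_betw (conj_perm g) (centralizers G - {carrier G}) (centralizers G - {carrier G})"
    by (rule bij_betw_cong[THEN iffD2, rotated]) (simp add: conj_perm_def)
qed (auto simp: conj_perm_def)

text \<open>In a semi-simple group the action is faithful: if \<open>a = h\<^sup>-\<^sup>1 g\<close> fixes every
  centralizer, then \<open>C(a x a\<^sup>-\<^sup>1) = C(x)\<close>, so \<open>x\<close> commutes with \<open>a x a\<^sup>-\<^sup>1\<close> for all \<open>x\<close>.\<close>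

lemma semisimple_conj_perm_inj:
  assumes ss: "semisimple_group G"
  shows "inj_on conj_perm (carrier G)"
proof (rule inj_onI)
  fix g h assume g: "g \<in> carrier G" and h: "h \<in> carrier G" and gh: "conj_perm g = conj_perm h"
  define a where "a = inv h \<otimes> g"
  have a: "a \<in> carrier G" using g h by (simp add: a_def)
  have fix_cent: "conj_image G a C = C" if C: "C \<in> centralizers G" for C
  proof (cases "C = carrier G")
    case True
    then show ?thesis using conj_image_carrier[OF a] by simp
  next
    case False
    then have "conj_image G g C = conj_image G h C"
      using fun_cong[OF gh, of C] C by (simp add: conj_perm_def)
    then show ?thesis
      using conj_image_inv[OF centralizers_subset[OF C] h]
        conj_image_mult[OF centralizers_subset[OF C] g inv_closed[OF h]]
      by (simp add: a_def)
  qed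
  have "x \<otimes> (a \<otimes> x \<otimes> inv a) = (a \<otimes> x \<otimes> inv a) \<otimes> x" if x: "x \<in> carrier G" for x
  proof -
    have "centralizer G (a \<otimes> x \<otimes> inv a) = centralizer G x"
      using fix_cent[of "centralizer G x"] conj_image_centralizer[OF a x] x
      by (simp add: centralizers_def)
    moreover have "a \<otimes> x \<otimes> inv a \<in> centralizer G (a \<otimes> x \<otimes> inv a)"
      using a x by (simp add: centralizer_def)
    ultimately show ?thesis by (simp add: centralizer_def)
  qed
  then have "a = \<one>" using semisimple_commuting_conjugation_trivial[OF ss a] by blast
  then show "g = h" using g h inv_solve_left'[of \<one> h g] unfolding a_def by simp
qed

end

theorem proposition2p5:
  fixes G :: "('a, 'b) monoid_scheme" and n :: nat
  assumes "group G"
    and "semisimple_group G"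
    and "n > 0"
    and "finite (centralizers G)"
    and "card (centralizers G) = n"
  shows "finite (carrier G) \<and> card (carrier G) \<le> fact (n - 1)"
proof -
  interpret group G by fact
  define S where "S = centralizers G - {carrier G}"
  have finS: "finite S" and cardS: "card S = n - 1"
    using assms(4,5) carrier_in_centralizers by (auto simp: S_def)
  have maps: "conj_perm ` carrier G \<subseteq> {p. p permutes S}"
    using conj_perm_permutes by (auto simp: S_def)
  have inj: "inj_on conj_perm (carrier G)"
    using semisimple_conj_perm_inj[OF assms(2)] .
  have finP: "finite {p. p permutes S}" using finite_permutations[OF finS] .
  have "finite (carrier G)" using finite_imageD[OF finite_subset[OF maps finP] inj] .
  moreover have "card (carrier G) \<le> card {p. p permutes S}" using card_inj_on_le[OF inj maps finP] .
  ultimately show ?thesis using card_permutations[OF cardS finS] by simp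
qed

end
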